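(* Let $A$ be a finite abelian group of even exponent $m$. If $A$ has no sections isomorphic to any of $Z_2^3$, $Z_4\times Z_2$, $Z_p^2$, $Z_p\times Z_2^2$, where $p$ ranges over the odd prime divisors of $m$, then $A$ is isomorphic to a section of the dihedral group $D_{2m}=\langle a,b\mid a^m=b^2=1,\ b^{-1}ab=a^{-1}\rangle$.
   Context: $Z_n$ denotes the cyclic group of order $n$; a section of a group is a quotient of one of its subgroups. *)

theory Defs
  imports "HOL-Algebra.Algebra"
begin

definition group_exponent :: "('a, 'b) monoid_scheme \<Rightarrow> nat" where
  "group_exponent G = (LEAST n. 0 < n \<and> (\<forall>x\<in>carrier G. x [^]\<^bsub>G\<^esub> n = \<one>\<^bsub>G\<^esub>))"

definition section_of :: "('c, 'd) monoid_scheme \<Rightarrow> ('a, 'b) monoid_scheme \<Rightarrow> bool" where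
  "section_of B G \<longleftrightarrow> (\<exists>H N. subgroup H G \<and> normal N (G\<lparr>carrier := H\<rparr>) \<and>
        B \<cong> ((G\<lparr>carrier := H\<rparr>) Mod N))"

abbreviation Zc :: "nat \<Rightarrow> int monoid" where
  "Zc n \<equiv> integer_mod_group n"

text \<open>Dihedral group D_{2m} = <a,b | a^m = b^2 = 1, b^-1 a b = a^-1>, realised concretely:
  the pair (i,j) with 0 \<le> i < m, 0 \<le> j < 2 stands for a^i b^j, and
  a^i b^j a^k b^l = a^(i + (-1)^j k) b^(j+l).\<close>
definition dihedral_group :: "nat \<Rightarrow> (int \<times> int) monoid" where
  "dihedral_group m = \<lparr>carrier = {0..<int m} \<times> {0..<2},
     monoid.mult = (\<lambda>(i, j) (k, l). ((i + (if j = 0 then k else - k)) mod int m, (j + l) mod 2)),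
     one = (0, 0)\<rparr>"

end

theory Submission
  imports Defs
begin

(*
  Let g be an element of maximal order m. In a finite abelian group the order of every element
  divides m, so m is the exponent. If g generates A, then A is cyclic of order m, i.e. isomorphic
  to the rotation subgroup of D_2m. Otherwise there is an element y outside <g> with y^p in <g>
  for a prime p; maximality of m lets us correct y by a power of g to an element z of order p
  outside <g>, and p divides m. Since <z> meets <g> trivially, the subgroups <g^(m/d)> x <z>
  yield the sections Z_p x Z_p (p odd), Z_4 x Z_2 (4 dividing m) and Z_q x Z_2 x Z_2 (q an odd
  prime divisor of m). Excluding them forces p = m = 2, so A has exponent 2 and contains
  <g> x <z> = Z_2 x Z_2; an element outside it would give a section Z_2^3. Hence
  A = Z_2 x Z_2, which is D_4 itself.
*)

lemma section_of_subgroupI: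
  assumes "group G" and "subgroup H G" and "B \<cong> G\<lparr>carrier := H\<rparr>"
  shows "section_of B G"
proof -
  interpret H: group "G\<lparr>carrier := H\<rparr>"
    using assms group.subgroup_imp_group by blast
  let ?one = "{\<one>\<^bsub>G\<lparr>carrier := H\<rparr>\<^esub>}"
  have "G\<lparr>carrier := H\<rparr> \<cong> G\<lparr>carrier := H\<rparr> Mod ?one"
    using group.iso_sym[OF normal.factorgroup_is_group[OF H.one_is_normal]]
      is_isoI[OF H.trivial_factor_iso] by blast
  then show ?thesis
    unfolding section_of_def using assms(2,3) H.one_is_normal iso_trans by blast
qed

lemma section_of_monI:
  assumes "group B" and "group G" and "f \<in> mon B G"
  shows "section_of B G"
proof -
  interpret f: group_hom B G f
    using assms by (simp add: group_hom_def group_hom_axioms_def mon_def)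
  have "f \<in> iso B (G\<lparr>carrier := f ` carrier B\<rparr>)"
    using assms(3) by (auto simp: iso_def mon_def hom_def bij_betw_def)
  then show ?thesis
    using section_of_subgroupI[OF assms(2) f.img_is_subgroup] is_isoI by blast
qed

lemma section_of_refl: "group G \<Longrightarrow> section_of G G"
  using section_of_subgroupI[OF _ group.subgroup_self, of G G] by simp

lemma section_of_iso:
  assumes "A \<cong> B" and "section_of B G"
  shows "section_of A G"
  using assms iso_trans unfolding section_of_def by blast

lemma group_dihedral_group:
  assumes "0 < m"
  shows "group (dihedral_group m)"
proof -
  have bit: "j \<in> {0..<2} \<Longrightarrow> j = 0 \<or> j = 1" for j :: int
    by auto
  show ?thesis
  proof (rule groupI)
    fix x y z
    assume "x \<in> carrier (dihedral_group m)" "y \<in> carrier (dihedral_group m)"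
      "z \<in> carrier (dihedral_group m)"
    then obtain a b c d e f where "x = (a, b)" "y = (c, d)" "z = (e, f)"
      "b = 0 \<or> b = 1" "d = 0 \<or> d = 1" "f = 0 \<or> f = 1"
      by (auto simp: dihedral_group_def dest!: bit)
    then show "x \<otimes>\<^bsub>dihedral_group m\<^esub> y \<otimes>\<^bsub>dihedral_group m\<^esub> z =
        x \<otimes>\<^bsub>dihedral_group m\<^esub> (y \<otimes>\<^bsub>dihedral_group m\<^esub> z)"
      by (auto simp: dihedral_group_def mod_add_left_eq mod_add_right_eq mod_diff_right_eq
          simp flip: diff_conv_add_uminus) (simp_all add: algebra_simps)
  next
    fix x
    assume "x \<in> carrier (dihedral_group m)"
    then obtain i j where x: "x = (i, j)" "i \<in> {0..<int m}" "j = 0 \<or> j = 1"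
      by (auto simp: dihedral_group_def dest!: bit)
    let ?y = "if j = 0 then ((- i) mod int m, 0) else (i, 1)"
    show "\<exists>y\<in>carrier (dihedral_group m). y \<otimes>\<^bsub>dihedral_group m\<^esub> x = \<one>\<^bsub>dihedral_group m\<^esub>"
      using x assms by (intro bexI[of _ ?y]) (auto simp: dihedral_group_def mod_add_left_eq)
  qed (use assms in \<open>auto simp: dihedral_group_def\<close>)
qed

lemma rotation_mon_dihedral_group:
  assumes "0 < m"
  shows "(\<lambda>i. (i, 0)) \<in> mon (Zc m) (dihedral_group m)"
  using assms
  by (auto simp: mon_def hom_def inj_on_def carrier_integer_mod_group dihedral_group_def)

lemma dihedral_group_2: "dihedral_group 2 = Zc 2 \<times>\<times> Zc 2"
proof -
  have "(i + (if j = 0 then k else - k)) mod 2 = (i + k) mod 2" for i j k :: int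
    by presburger
  then show ?thesis
    by (auto simp: dihedral_group_def DirProd_def integer_mod_group_def integer_group_def)
qed

lemma (in group) int_pow_mod_ord:
  "x \<in> carrier G \<Longrightarrow> x [^] (i mod int (ord x)) = x [^] i"
  by (simp add: int_pow_eq mod_eq_dvd_iff)

lemma (in group) int_pow_mon_integer_mod_group:
  assumes "x \<in> carrier G"
  shows "(\<lambda>i. x [^] i) \<in> mon (Zc (ord x)) G"
proof -
  have "(\<lambda>i. x [^] i) \<in> hom (Zc (ord x)) G"
    using assms by (intro homI) (auto simp: int_pow_mod_ord int_pow_mult)
  moreover have "inj_on (\<lambda>i. x [^] i) (carrier (Zc (ord x)))"
  proof (rule inj_onI)
    fix i k
    assume "i \<in> carrier (Zc (ord x))" "k \<in> carrier (Zc (ord x))" "x [^] i = x [^] k"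
    then show "i = k"
      using assms by (auto simp: int_pow_eq carrier_integer_mod_group split: if_splits
          simp flip: mod_eq_dvd_iff)
  qed
  ultimately show ?thesis
    by (simp add: mon_def)
qed

lemma (in group) int_pow_image_integer_mod_group:
  assumes x: "x \<in> carrier G"
  shows "(\<lambda>i. x [^] i) ` carrier (Zc (ord x)) = range (\<lambda>i::int. x [^] i)"
proof -
  have "x [^] i \<in> (\<lambda>i. x [^] i) ` carrier (Zc (ord x))" for i :: int
  proof (cases "ord x = 0")
    case False
    then have "i mod int (ord x) \<in> carrier (Zc (ord x))"
      by (simp add: carrier_integer_mod_group)
    then show ?thesis
      using int_pow_mod_ord[OF x, of i] by (metis image_eqI)
  qed (simp add: carrier_integer_mod_group)
  then show ?thesis
    by auto
qed

lemma (in group) section_of_dihedral_group_if_cyclic: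
  assumes g: "g \<in> carrier G" and cyclic: "carrier G = range (\<lambda>i::int. g [^] i)"
    and "0 < ord g"
  shows "section_of G (dihedral_group (ord g))"
proof -
  have "(\<lambda>i. g [^] i) \<in> iso (Zc (ord g)) G"
    using int_pow_mon_integer_mod_group[OF g] int_pow_image_integer_mod_group[OF g] cyclic
    by (simp add: iso_iff_mon_epi epi_def mon_def)
  then have "G \<cong> Zc (ord g)"
    using group.iso_sym[OF group_integer_mod_group] is_isoI by blast
  moreover have "section_of (Zc (ord g)) (dihedral_group (ord g))"
    using section_of_monI[OF group_integer_mod_group group_dihedral_group rotation_mon_dihedral_group]
      \<open>0 < ord g\<close> by blast
  ultimately show ?thesis
    by (rule section_of_iso)
qed

lemma (in group) ord_pow_div:
  assumes "x \<in> carrier G" and "d dvd ord x" and "0 < ord x"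
  shows "ord (x [^] (ord x div d)) = d"
proof -
  obtain k where k: "ord x = d * k"
    using assms(2) by blast
  then have "0 < k" "0 < d"
    using assms(3) by auto
  then show ?thesis
    using assms(1) by (subst ord_pow) (simp_all add: k)
qed

lemma (in comm_group) ord_mult_coprime:
  assumes x: "x \<in> carrier G" and y: "y \<in> carrier G" and coprime: "coprime (ord x) (ord y)"
  shows "ord (x \<otimes> y) = ord x * ord y"
proof -
  have ord_dvd: "ord a dvd ord (a \<otimes> b)"
    if a: "a \<in> carrier G" and b: "b \<in> carrier G" and "coprime (ord a) (ord b)" for a b
  proof -
    let ?n = "ord (a \<otimes> b) * ord b"
    have "a [^] ?n = (a \<otimes> b) [^] ?n"
      using a b by (simp add: pow_mult_distrib m_comm pow_eq_id)
    also have "\<dots> = \<one>"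
      using a b by (simp add: pow_eq_id)
    finally have "ord a dvd ?n"
      using a by (simp add: pow_eq_id)
    then show ?thesis
      using \<open>coprime (ord a) (ord b)\<close> by (simp add: coprime_dvd_mult_left_iff)
  qed
  have "ord x * ord y dvd ord (x \<otimes> y)"
    using ord_dvd[OF x y coprime] ord_dvd[OF y x] coprime x y
    by (simp add: divides_mult coprime_commute m_comm)
  then show ?thesis
    using abelian_ord_mul_divides[OF x y] by (simp add: dvd_antisym)
qed

lemma (in comm_group) ex_ord_multiple_of_all_ords:
  assumes finite: "finite (carrier G)"
  obtains g where "g \<in> carrier G" and "\<And>x. x \<in> carrier G \<Longrightarrow> ord x dvd ord g"
proof -
  obtain g where g: "g \<in> carrier G" and max: "\<And>x. x \<in> carrier G \<Longrightarrow> ord x \<le> ord g"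
    using finite Max_in[of "ord ` carrier G"] Max_ge[of "ord ` carrier G"] by fastforce
  have "ord x dvd ord g" if x: "x \<in> carrier G" for x
  proof (rule ccontr)
    assume not_dvd: "\<not> ord x dvd ord g"
    have pos: "0 < ord x" "0 < ord g"
      using ord_ge_1 finite x g by fastforce+
    have "\<exists>p. Factorial_Ring.prime p \<and> multiplicity p (ord g) < multiplicity p (ord x)"
    proof (rule ccontr)
      assume "\<nexists>p. Factorial_Ring.prime p \<and> multiplicity p (ord g) < multiplicity p (ord x)"
      then have "ord x dvd ord g"
        using pos by (intro multiplicity_le_imp_dvd) (auto simp: not_less)
      with not_dvd show False ..
    qed
    then obtain p where p: "Factorial_Ring.prime p" and less: "multiplicity p (ord g) < multiplicity p (ord x)"
      by blast
    define a where "a = multiplicity p (ord x)"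
    define b where "b = multiplicity p (ord g)"
    obtain n where n: "ord g = p ^ b * n" and "\<not> p dvd n"
      using multiplicity_decompose'[of "ord g" p] pos p not_prime_unit unfolding b_def by blast
    have "0 < n"
      using n pos by (auto intro: gr0I)
    \<comment> \<open>The p-part of x times the p'-part of g has order larger than ord g.\<close>
    let ?y = "x [^] (ord x div p ^ a) \<otimes> g [^] (p ^ b)"
    have "ord (x [^] (ord x div p ^ a)) = p ^ a"
      using x pos by (intro ord_pow_div) (simp_all add: a_def multiplicity_dvd)
    moreover have "ord (g [^] (p ^ b)) = n"
      using ord_pow[OF g, of "p ^ b"] n \<open>0 < n\<close> p by (simp add: prime_gt_0_nat)
    moreover have "coprime (p ^ a) n"
      using p \<open>\<not> p dvd n\<close> by (simp add: prime_imp_coprime)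
    ultimately have "ord ?y = p ^ a * n"
      using x g by (simp add: ord_mult_coprime)
    moreover have "p ^ b < p ^ a"
      using less prime_gt_1_nat[OF p] unfolding a_def b_def by (rule power_strict_increasing)
    then have "ord g < p ^ a * n"
      using n \<open>0 < n\<close> by simp
    ultimately show False
      using max[of ?y] x g by simp
  qed
  then show thesis
    using that g by blast
qed

lemma (in group) group_exponent_eq_ord:
  assumes "finite (carrier G)" and "g \<in> carrier G" and "\<And>x. x \<in> carrier G \<Longrightarrow> ord x dvd ord g"
  shows "group_exponent G = ord g"
  unfolding group_exponent_def
proof (rule Least_equality)
  show "0 < ord g \<and> (\<forall>x\<in>carrier G. x [^] ord g = \<one>)"
    using ord_ge_1[OF assms(1,2)] assms(3) by (auto simp: pow_eq_id)
  show "ord g \<le> n" if "0 < n \<and> (\<forall>x\<in>carrier G. x [^] n = \<one>)" for n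
    using that assms(2) by (auto simp: pow_eq_id intro: dvd_imp_le)
qed

lemma (in group) mem_subgroup_if_pow_coprime:
  assumes H: "subgroup H G" and z: "z \<in> carrier G" and "z [^] j \<in> H"
    and "coprime j (int (ord z))"
  shows "z \<in> H"
proof -
  obtain u v where "u * j + v * int (ord z) = 1"
    using bezout_int[of j "int (ord z)"] assms(4) by (auto simp: coprime_iff_gcd_eq_1)
  then have "z = z [^] (u * j + v * int (ord z))"
    using z by simp
  also have "\<dots> = z [^] (j * u) \<otimes> z [^] (int (ord z) * v)"
    using z by (simp add: int_pow_mult mult.commute)
  also have "\<dots> = (z [^] j) [^] u"
    using z by (simp add: int_pow_pow int_pow_eq_id)
  finally show ?thesis
    using subgroup_int_pow_closed[OF H \<open>z [^] j \<in> H\<close>, of u] by metis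
qed

lemma (in group) powers_inter_subgroup_prime_ord:
  assumes "subgroup H G" and z: "z \<in> carrier G" and p: "Factorial_Ring.prime (ord z)"
    and "z \<notin> H"
  shows "range (\<lambda>i::int. z [^] i) \<inter> H \<subseteq> {\<one>}"
proof clarify
  fix j :: int
  assume "z [^] j \<in> H"
  show "z [^] j = \<one>"
  proof (rule ccontr)
    assume "z [^] j \<noteq> \<one>"
    then have "\<not> int (ord z) dvd j"
      using z by (simp add: int_pow_eq_id)
    then have "coprime (int (ord z)) j"
      using p by (intro prime_imp_coprime) simp_all
    then show False
      using mem_subgroup_if_pow_coprime assms \<open>z [^] j \<in> H\<close> coprime_commute by blast
  qed
qed

lemma (in group) ex_prime_pow_in_subgroup:
  assumes "finite (carrier G)" and "x \<in> carrier G" and "x \<notin> H" and "\<one> \<in> H"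
  obtains y p where "y \<in> carrier G" and "y \<notin> H" and "Factorial_Ring.prime p"
    and "y [^] (p::nat) \<in> H"
proof -
  define t where "t = (LEAST t::nat. 0 < t \<and> x [^] t \<in> H)"
  have "0 < ord x \<and> x [^] ord x \<in> H"
    using ord_ge_1[OF assms(1,2)] assms(2,4) by simp
  then have t: "0 < t \<and> x [^] t \<in> H"
    unfolding t_def by (rule LeastI)
  then have "t \<noteq> 1"
    using assms(2,3) by auto
  then obtain p where p: "Factorial_Ring.prime p" "p dvd t"
    using prime_factor_nat by blast
  have "t div p < t"
    using t prime_gt_1_nat[OF p(1)] by simp
  then have "\<not> (0 < t div p \<and> x [^] (t div p) \<in> H)"
    unfolding t_def by (rule not_less_Least)
  moreover have "0 < t div p"
    using t dvd_imp_le[OF p(2)] prime_gt_0_nat[OF p(1)] by (simp add: div_greater_zero_iff)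
  moreover have "(x [^] (t div p)) [^] p = x [^] t"
    using p assms(2) by (simp add: nat_pow_pow)
  ultimately show thesis
    using that[of "x [^] (t div p)" p] assms(2) p(1) t by auto
qed

lemma (in group) prime_dvd_ord_if_pow_in_subgroup:
  assumes H: "subgroup H G" and y: "y \<in> carrier G" and "y \<notin> H"
    and p: "Factorial_Ring.prime p" and "y [^] (p::nat) \<in> H"
  shows "p dvd ord y"
proof (rule ccontr)
  assume "\<not> p dvd ord y"
  then have "coprime (int p) (int (ord y))"
    using p by (simp add: prime_imp_coprime)
  then show False
    using mem_subgroup_if_pow_coprime[OF H y, of "int p"] assms(3,5) by (simp add: int_pow_int)
qed

lemma (in group) dvd_exponent_if_pow_eq_int_pow:
  assumes g: "g \<in> carrier G" and y: "y \<in> carrier G" and "ord y dvd ord g" and "0 < ord g"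
    and "p dvd ord g" and k: "y [^] (p::nat) = g [^] (k::int)"
  shows "int p dvd k"
proof -
  obtain q where q: "ord g = p * q"
    using \<open>p dvd ord g\<close> by blast
  have "g [^] (k * int q) = (g [^] k) [^] (int q)"
    using g by (simp add: int_pow_pow)
  also have "\<dots> = (y [^] p) [^] q"
    by (simp add: k int_pow_int)
  also have "\<dots> = y [^] ord g"
    using y by (simp add: nat_pow_pow q)
  also have "\<dots> = \<one>"
    using y \<open>ord y dvd ord g\<close> by (simp add: pow_eq_id)
  finally have "int p * int q dvd k * int q"
    using int_pow_eq_id[OF g] q by simp
  moreover have "0 < q"
    using q \<open>0 < ord g\<close> by (auto intro: gr0I)
  ultimately show ?thesis
    by simp
qed

lemma (in comm_group) ex_prime_ord_not_in_powers:
  assumes finite: "finite (carrier G)" and g: "g \<in> carrier G"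
    and max: "\<And>x. x \<in> carrier G \<Longrightarrow> ord x dvd ord g"
    and "\<not> carrier G \<subseteq> range (\<lambda>i::int. g [^] i)"
  obtains z where "z \<in> carrier G" and "z \<notin> range (\<lambda>i::int. g [^] i)"
    and "Factorial_Ring.prime (ord z)" and "ord z dvd ord g"
proof -
  let ?C = "range (\<lambda>i::int. g [^] i)"
  have C: "subgroup ?C G"
    using subgroup_of_powers g .
  obtain x where x: "x \<in> carrier G" "x \<notin> ?C"
    using assms(4) by blast
  obtain y p where y: "y \<in> carrier G" "y \<notin> ?C" and p: "Factorial_Ring.prime p"
    and "y [^] (p::nat) \<in> ?C"
    by (rule ex_prime_pow_in_subgroup[OF finite x subgroup.one_closed[OF C]])
  then obtain k :: int where k: "y [^] p = g [^] k"
    by auto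
  have "p dvd ord g"
    using prime_dvd_ord_if_pow_in_subgroup[OF C y p \<open>y [^] p \<in> ?C\<close>] max[OF y(1)]
    by (rule dvd_trans)
  then obtain l where l: "k = int p * l"
    using dvd_exponent_if_pow_eq_int_pow[OF g y(1) max[OF y(1)] _ _ k] ord_ge_1[OF finite g]
    by fastforce
  \<comment> \<open>Since p divides k, correcting y by g^-l kills its p-th power without moving it into <g>.\<close>
  define z where "z = y \<otimes> inv (g [^] l)"
  have z: "z \<in> carrier G"
    unfolding z_def using y g by simp
  have "z \<notin> ?C"
  proof
    assume "z \<in> ?C"
    then have "z \<otimes> g [^] l \<in> ?C"
      using subgroup.m_closed[OF C] by blast
    then show False
      using y g by (simp add: z_def m_assoc)
  qed
  have "(g [^] l) [^] p = (g [^] l) [^] (int p)"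
    by (simp add: int_pow_int)
  also have "\<dots> = g [^] k"
    using g by (simp add: int_pow_pow l mult.commute)
  finally have "z [^] p = \<one>"
    using g y by (simp add: z_def nat_pow_distrib nat_pow_inv k)
  then have "ord z dvd p"
    using z by (simp add: pow_eq_id)
  moreover have "ord z \<noteq> 1"
    using \<open>z \<notin> ?C\<close> subgroup.one_closed[OF C] ord_eq_1[OF z] by auto
  ultimately have "ord z = p"
    using p by (auto simp: prime_nat_iff)
  then show thesis
    using that z \<open>z \<notin> ?C\<close> p \<open>p dvd ord g\<close> by blast
qed

lemma (in comm_group) mon_DirProd_mult:
  assumes A: "group A" and B: "group B" and f: "f \<in> mon A G" and h: "h \<in> mon B G"
    and disjoint: "f ` carrier A \<inter> h ` carrier B \<subseteq> {\<one>}"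
  shows "(\<lambda>(a, b). f a \<otimes> h b) \<in> mon (A \<times>\<times> B) G"
proof -
  interpret f: group_hom A G f
    using A f by (simp add: group_hom_def group_hom_axioms_def mon_def)
  interpret h: group_hom B G h
    using B h by (simp add: group_hom_def group_hom_axioms_def mon_def)
  interpret group_disjoint_sum G "f ` carrier A" "h ` carrier B"
    using f.img_is_subgroup h.img_is_subgroup by (simp add: group_disjoint_sum_def)
  have "(\<lambda>(a, b). f a \<otimes> h b) \<in> hom (A \<times>\<times> B) G"
  proof (rule homI)
    fix x y
    assume "x \<in> carrier (A \<times>\<times> B)" and "y \<in> carrier (A \<times>\<times> B)"
    then obtain a b a' b' where "x = (a, b)" "y = (a', b')"
      and "a \<in> carrier A" "b \<in> carrier B" "a' \<in> carrier A" "b' \<in> carrier B"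
      by auto
    then show "(case x \<otimes>\<^bsub>A \<times>\<times> B\<^esub> y of (a, b) \<Rightarrow> f a \<otimes> h b) =
        (case x of (a, b) \<Rightarrow> f a \<otimes> h b) \<otimes> (case y of (a, b) \<Rightarrow> f a \<otimes> h b)"
      by (simp add: m_ac)
  qed auto
  moreover have "inj_on (\<lambda>(a, b). f a \<otimes> h b) (carrier (A \<times>\<times> B))"
  proof (rule inj_onI, clarsimp)
    fix a b a' b'
    assume "a \<in> carrier A" "b \<in> carrier B" "a' \<in> carrier A" "b' \<in> carrier B"
      and "f a \<otimes> h b = f a' \<otimes> h b'"
    then have "f a = f a'" "h b = h b'"
      using cancel[THEN iffD1, OF disjoint, rule_format, of "f a" "h b" "f a'" "h b'"] by auto
    then show "a = a' \<and> b = b'"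
      using f h \<open>a \<in> carrier A\<close> \<open>b \<in> carrier B\<close> \<open>a' \<in> carrier A\<close> \<open>b' \<in> carrier B\<close>
      by (auto simp: mon_def dest: inj_onD)
  qed
  ultimately show ?thesis
    by (simp add: mon_def)
qed

lemma (in comm_group) powers_DirProd_mon:
  assumes H: "subgroup H G" and "x \<in> H" and z: "z \<in> carrier G"
    and "Factorial_Ring.prime (ord z)" and "z \<notin> H"
  shows "(\<lambda>(i, j). x [^] i \<otimes> z [^] j) \<in> mon (Zc (ord x) \<times>\<times> Zc (ord z)) G"
proof -
  have x: "x \<in> carrier G"
    using H \<open>x \<in> H\<close> subgroup.subset by blast
  have "range (\<lambda>i::int. x [^] i) \<subseteq> H"
    using subgroup_int_pow_closed[OF H \<open>x \<in> H\<close>] by blast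
  then have "(\<lambda>i. x [^] i) ` carrier (Zc (ord x)) \<inter> (\<lambda>i. z [^] i) ` carrier (Zc (ord z)) \<subseteq> {\<one>}"
    using powers_inter_subgroup_prime_ord[OF assms(1,3-5)]
    by (auto simp: int_pow_image_integer_mod_group x z)
  then show ?thesis
    using mon_DirProd_mult[OF group_integer_mod_group group_integer_mod_group
        int_pow_mon_integer_mod_group[OF x] int_pow_mon_integer_mod_group[OF z]]
    by simp
qed

lemma (in comm_group) section_DirProd_if_coprime_exponent:
  assumes B: "group B" and f: "f \<in> mon B G" and x: "x \<in> carrier G"
    and exponent: "\<And>b. b \<in> carrier B \<Longrightarrow> f b [^] n = \<one>" and coprime: "coprime (ord x) n"
  shows "section_of (Zc (ord x) \<times>\<times> B) G"
proof -
  have "y = \<one>" if y: "y \<in> range (\<lambda>i::int. x [^] i)" "y \<in> f ` carrier B" for y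
  proof -
    obtain i :: int and b where i: "y = x [^] i" and b: "b \<in> carrier B" "y = f b"
      using y by blast
    have y: "y \<in> carrier G"
      using x i by simp
    have "y [^] ord x = \<one>"
      using x by (simp add: i int_pow_pow int_pow_eq_id flip: int_pow_int)
    moreover have "y [^] n = \<one>"
      using exponent b by simp
    ultimately have "ord y dvd ord x" "ord y dvd n"
      using y by (simp_all add: pow_eq_id)
    then have "ord y = 1"
      using coprime coprime_common_divisor by fastforce
    then show "y = \<one>"
      using ord_eq_1[OF y] by simp
  qed
  then have "range (\<lambda>i::int. x [^] i) \<inter> f ` carrier B \<subseteq> {\<one>}"
    by blast
  then show ?thesis
    using mon_DirProd_mult[OF group_integer_mod_group B int_pow_mon_integer_mod_group[OF x] f]
    by (intro section_of_monI DirProd_group group_integer_mod_group B is_group)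
      (simp_all add: int_pow_image_integer_mod_group x)
qed

lemma (in comm_group) section_of_odd_DirProd_Klein:
  assumes H: "subgroup H G" and "w \<in> H" and "odd (ord w)"
    and "x \<in> H" and "ord x = 2" and z: "z \<in> carrier G" and "ord z = 2" and "z \<notin> H"
  shows "section_of (Zc (ord w) \<times>\<times> Zc 2 \<times>\<times> Zc 2) G"
proof -
  have x: "x \<in> carrier G" and w: "w \<in> carrier G"
    using H \<open>x \<in> H\<close> \<open>w \<in> H\<close> subgroup.subset by blast+
  let ?f = "\<lambda>(i, j). x [^] i \<otimes> z [^] j"
  have "Factorial_Ring.prime (ord z)"
    using \<open>ord z = 2\<close> by simp
  then have f: "?f \<in> mon (Zc 2 \<times>\<times> Zc 2) G"
    using powers_DirProd_mon[OF H \<open>x \<in> H\<close> z _ \<open>z \<notin> H\<close>] \<open>ord x = 2\<close> \<open>ord z = 2\<close> by simp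
  have "(x [^] i \<otimes> z [^] j) [^] (2::nat) = \<one>" for i j :: int
  proof -
    have square: "(a [^] k) [^] (2::nat) = a [^] (k * 2)" if "a \<in> carrier G" for a and k :: int
    proof -
      have "(a [^] k) [^] (2::nat) = (a [^] k) [^] (int 2)"
        by (simp only: int_pow_int)
      then show ?thesis
        using that by (simp add: int_pow_pow)
    qed
    have "(x [^] i \<otimes> z [^] j) [^] (2::nat) = x [^] (i * 2) \<otimes> z [^] (j * 2)"
      using x z by (simp add: nat_pow_distrib square)
    moreover have "x [^] (i * 2) = \<one>" and "z [^] (j * 2) = \<one>"
      using x z \<open>ord x = 2\<close> \<open>ord z = 2\<close> by (simp_all add: int_pow_eq_id)
    ultimately show ?thesis
      by simp
  qed
  then have "\<And>b. b \<in> carrier (Zc 2 \<times>\<times> Zc 2) \<Longrightarrow> ?f b [^] (2::nat) = \<one>"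
    by auto
  moreover have "coprime (ord w) 2"
    using \<open>odd (ord w)\<close> by (simp add: coprime_commute)
  ultimately show ?thesis
    by (rule section_DirProd_if_coprime_exponent[OF DirProd_group[OF group_integer_mod_group
          group_integer_mod_group] f w])
qed

lemma (in comm_group) iso_if_no_DirProd_section:
  assumes B: "group B" and f: "f \<in> mon B G" and p: "Factorial_Ring.prime p"
    and exponent: "\<And>x. x \<in> carrier G \<Longrightarrow> x [^] p = \<one>"
    and no_section: "\<not> section_of (Zc p \<times>\<times> B) G"
  shows "G \<cong> B"
proof -
  interpret f: group_hom B G f
    using B f by (simp add: group_hom_def group_hom_axioms_def mon_def)
  have "carrier G \<subseteq> f ` carrier B"
  proof
    fix w
    assume w: "w \<in> carrier G"
    show "w \<in> f ` carrier B"
    proof (rule ccontr)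
      assume "w \<notin> f ` carrier B"
      moreover have "ord w dvd p"
        using exponent[OF w] w by (simp add: pow_eq_id)
      moreover have "w \<noteq> \<one>"
        using \<open>w \<notin> f ` carrier B\<close> f.hom_one f.G.one_closed by (metis image_eqI)
      ultimately have "ord w = p" "Factorial_Ring.prime (ord w)"
        using p ord_eq_1[OF w] by (auto simp: prime_nat_iff)
      have "range (\<lambda>i::int. w [^] i) \<inter> f ` carrier B \<subseteq> {\<one>}"
        using powers_inter_subgroup_prime_ord[OF f.img_is_subgroup w] \<open>Factorial_Ring.prime (ord w)\<close>
          \<open>w \<notin> f ` carrier B\<close> by blast
      then have "section_of (Zc (ord w) \<times>\<times> B) G"
        using mon_DirProd_mult[OF group_integer_mod_group B int_pow_mon_integer_mod_group[OF w] f]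
        by (intro section_of_monI DirProd_group group_integer_mod_group B is_group)
          (simp_all add: int_pow_image_integer_mod_group w)
      with no_section \<open>ord w = p\<close> show False
        by simp
    qed
  qed
  then have "f \<in> iso B G"
    using f by (auto simp: iso_iff_mon_epi epi_def mon_def hom_def)
  then show ?thesis
    using group.iso_sym[OF B] is_isoI by blast
qed

lemma eq_2_if_even_without_odd_prime_divisor:
  fixes m :: nat
  assumes "even m" and "\<not> 4 dvd m" and "\<And>q. Factorial_Ring.prime q \<Longrightarrow> q dvd m \<Longrightarrow> even q"
  shows "m = 2"
proof -
  obtain r where m: "m = 2 * r"
    using assms(1) by blast
  have "r = 1"
  proof (rule ccontr)
    assume "r \<noteq> 1"
    then obtain q where q: "Factorial_Ring.prime q" "q dvd r"
      using prime_factor_nat by blast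
    then have "even q"
      using assms(3)[of q] m by simp
    then have "\<not> 2 < q"
      using prime_odd_nat[OF q(1)] by blast
    then have "q = 2"
      using prime_ge_2_nat[OF q(1)] by linarith
    then obtain s where "r = 2 * s"
      using q(2) by blast
    then show False
      using assms(2) m by simp
  qed
  then show ?thesis
    using m by simp
qed

lemma (in comm_group) exponent_eq_2_if_not_cyclic:
  assumes finite: "finite (carrier G)" and g: "g \<in> carrier G"
    and max: "\<And>x. x \<in> carrier G \<Longrightarrow> ord x dvd ord g" and "even (ord g)"
    and not_cyclic: "\<not> carrier G \<subseteq> range (\<lambda>i::int. g [^] i)"
    and no_Z4_Z2: "\<not> section_of (Zc 4 \<times>\<times> Zc 2) G"
    and no_Zp_Zp: "\<And>p::nat. Factorial_Ring.prime p \<Longrightarrow> odd p \<Longrightarrow> p dvd ord g \<Longrightarrow>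
      \<not> section_of (Zc p \<times>\<times> Zc p) G"
    and no_Zp_Z2_Z2: "\<And>p::nat. Factorial_Ring.prime p \<Longrightarrow> odd p \<Longrightarrow> p dvd ord g \<Longrightarrow>
      \<not> section_of (Zc p \<times>\<times> Zc 2 \<times>\<times> Zc 2) G"
  shows "ord g = 2"
proof -
  let ?C = "range (\<lambda>i::int. g [^] i)"
  have C: "subgroup ?C G"
    using subgroup_of_powers g .
  have pos: "0 < ord g"
    using ord_ge_1[OF finite g] by simp
  obtain z where z: "z \<in> carrier G" "z \<notin> ?C" and prime: "Factorial_Ring.prime (ord z)"
    and "ord z dvd ord g"
    using ex_prime_ord_not_in_powers[OF finite g max not_cyclic] by blast
  have power_in_C: "g [^] (n::nat) \<in> ?C" for n
    by (metis int_pow_int rangeI)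
  have ord_power: "ord (g [^] (ord g div d)) = d" if "d dvd ord g" for d
    using ord_pow_div[OF g that pos] .
  have DirProd_section: "section_of (Zc d \<times>\<times> Zc (ord z)) G" if "d dvd ord g" for d
    using section_of_monI[OF DirProd_group[OF group_integer_mod_group group_integer_mod_group]
        is_group powers_DirProd_mon[OF C power_in_C[of "ord g div d"] z(1) prime z(2)]]
      ord_power[OF that]
    by simp
  have "ord z = 2"
  proof (rule ccontr)
    assume "ord z \<noteq> 2"
    then have "odd (ord z)"
      using prime_odd_nat[OF prime] prime_ge_2_nat[OF prime] by simp
    then show False
      using DirProd_section[OF \<open>ord z dvd ord g\<close>] no_Zp_Zp[OF prime _ \<open>ord z dvd ord g\<close>] by blast
  qed
  have "\<not> 4 dvd ord g"
    using DirProd_section[of 4] \<open>ord z = 2\<close> no_Z4_Z2 by auto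
  have "even q" if q: "Factorial_Ring.prime q" "q dvd ord g" for q
  proof (rule ccontr)
    assume "odd q"
    have "section_of (Zc (ord (g [^] (ord g div q))) \<times>\<times> Zc 2 \<times>\<times> Zc 2) G"
      using \<open>odd q\<close> \<open>ord z = 2\<close> ord_power[OF q(2)] ord_power[of 2] \<open>even (ord g)\<close>
      by (intro section_of_odd_DirProd_Klein[OF C power_in_C _ power_in_C[of "ord g div 2"] _ z(1) _ z(2)])
        simp_all
    then show False
      using no_Zp_Z2_Z2[OF q(1) \<open>odd q\<close> q(2)] ord_power[OF q(2)] by simp
  qed
  then show ?thesis
    using eq_2_if_even_without_odd_prime_divisor \<open>even (ord g)\<close> \<open>\<not> 4 dvd ord g\<close> by blast
qed

lemma (in comm_group) Klein_if_exponent_2: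
  assumes finite: "finite (carrier G)" and g: "g \<in> carrier G"
    and max: "\<And>x. x \<in> carrier G \<Longrightarrow> ord x dvd ord g" and "ord g = 2"
    and not_cyclic: "\<not> carrier G \<subseteq> range (\<lambda>i::int. g [^] i)"
    and no_Z2_cube: "\<not> section_of (Zc 2 \<times>\<times> Zc 2 \<times>\<times> Zc 2) G"
  shows "G \<cong> Zc 2 \<times>\<times> Zc 2"
proof -
  let ?C = "range (\<lambda>i::int. g [^] i)"
  obtain z where z: "z \<in> carrier G" "z \<notin> ?C" and prime: "Factorial_Ring.prime (ord z)"
    and "ord z dvd ord g"
    using ex_prime_ord_not_in_powers[OF finite g max not_cyclic] by blast
  then have "ord z = 2"
    using \<open>ord g = 2\<close> primes_dvd_imp_eq[OF _ two_is_prime_nat] by simp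
  have "g \<in> ?C"
    by (metis int_pow_1[OF g] rangeI)
  then have "(\<lambda>(i, j). g [^] i \<otimes> z [^] j) \<in> mon (Zc 2 \<times>\<times> Zc 2) G"
    using powers_DirProd_mon[OF subgroup_of_powers[OF g] \<open>g \<in> ?C\<close> z(1) prime z(2)]
      \<open>ord g = 2\<close> \<open>ord z = 2\<close>
    by simp
  moreover have "x [^] (2::nat) = \<one>" if "x \<in> carrier G" for x
    using max[OF that] \<open>ord g = 2\<close> pow_eq_id[OF that] by simp
  ultimately show ?thesis
    using iso_if_no_DirProd_section[OF DirProd_group[OF group_integer_mod_group
        group_integer_mod_group] _ two_is_prime_nat _ no_Z2_cube] by blast
qed

theorem lemma7:
  fixes A :: "('a, 'b) monoid_scheme" and m :: nat
  assumes "comm_group A" and "finite (carrier A)"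
    and "group_exponent A = m" and "even m"
    and "\<not> section_of (Zc 2 \<times>\<times> Zc 2 \<times>\<times> Zc 2) A"
    and "\<not> section_of (Zc 4 \<times>\<times> Zc 2) A"
    and "\<And>p::nat. Factorial_Ring.prime p \<Longrightarrow> odd p \<Longrightarrow> p dvd m \<Longrightarrow> \<not> section_of (Zc p \<times>\<times> Zc p) A"
    and "\<And>p::nat. Factorial_Ring.prime p \<Longrightarrow> odd p \<Longrightarrow> p dvd m \<Longrightarrow> \<not> section_of (Zc p \<times>\<times> Zc 2 \<times>\<times> Zc 2) A"
  shows "section_of A (dihedral_group m)"
proof -
  interpret A: comm_group A
    by fact
  obtain g where g: "g \<in> carrier A" and max: "\<And>x. x \<in> carrier A \<Longrightarrow> A.ord x dvd A.ord g"
    using A.ex_ord_multiple_of_all_ords[OF assms(2)] by blast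
  have m: "A.ord g = m"
    using A.group_exponent_eq_ord[OF assms(2) g max] assms(3) by simp
  show ?thesis
  proof (cases "carrier A \<subseteq> range (\<lambda>i::int. g [^]\<^bsub>A\<^esub> i)")
    case True
    then have "carrier A = range (\<lambda>i::int. g [^]\<^bsub>A\<^esub> i)"
      using g by auto
    then show ?thesis
      using A.section_of_dihedral_group_if_cyclic[OF g] A.ord_ge_1[OF assms(2) g] m by simp
  next
    case False
    then have "m = 2"
      using A.exponent_eq_2_if_not_cyclic[OF assms(2) g max _ False assms(6)] assms(4,7,8) m by simp
    moreover have "A \<cong> dihedral_group 2"
      using A.Klein_if_exponent_2[OF assms(2) g max _ False assms(5)] \<open>m = 2\<close> m
      by (simp add: dihedral_group_2)
    ultimately show ?thesis
      using section_of_iso section_of_refl[OF group_dihedral_group[of 2]] by simp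
  qed
qed

end
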